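(* Let $(A,\circ_A,[\cdot,\cdot]_A)$ and $(B,\circ_B,[\cdot,\cdot]_B)$ be dual pre-Poisson algebras. Define bilinear operations on $A\otimes B$ by $$(x\otimes a)\circ_{A\otimes B}(y\otimes b)=(x\circ_A y)\otimes(a\circ_B b),$$ $$[x\otimes a,y\otimes b]_{A\otimes B}=[x,y]_A\otimes(a\circ_B b)+(x\circ_A y)\otimes[a,b]_B,$$ for $x,y\in A$, $a,b\in B$. Then $(A\otimes B,\circ_{A\otimes B},[\cdot,\cdot]_{A\otimes B})$ is a dual pre-Poisson algebra.
   Context: Field $\mathbb{F}$ of characteristic $0$. A dual pre-Poisson algebra is a vector space with bilinear operations $\circ,[\cdot,\cdot]$ satisfying, for all $x,y,z$: $x\circ(y\circ z)=(x\circ y)\circ z=(y\circ x)\circ z$; $[x,[y,z]]=[[x,y],z]+[y,[x,z]]$; $[x,y\circ z]=[x,y]\circ z+y\circ[x,z]$; $[x\circ y,z]=x\circ[y,z]+y\circ[x,z]$; $[x,y]\circ z=-[y,x]\circ z$. *)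

theory Defs
  imports Complex_Main
begin

definition bilinear_map ::
  "('k::field \<Rightarrow> 'a::ab_group_add \<Rightarrow> 'a) \<Rightarrow> ('k \<Rightarrow> 'b::ab_group_add \<Rightarrow> 'b) \<Rightarrow>
   ('k \<Rightarrow> 'c::ab_group_add \<Rightarrow> 'c) \<Rightarrow> ('a \<Rightarrow> 'b \<Rightarrow> 'c) \<Rightarrow> bool" where
  "bilinear_map sA sB sC f \<longleftrightarrow>
     (\<forall>x. Vector_Spaces.linear sB sC (f x)) \<and> (\<forall>y. Vector_Spaces.linear sA sC (\<lambda>x. f x y))"

definition dual_pre_Poisson ::
  "('k::field \<Rightarrow> 'a::ab_group_add \<Rightarrow> 'a) \<Rightarrow> ('a \<Rightarrow> 'a \<Rightarrow> 'a) \<Rightarrow> ('a \<Rightarrow> 'a \<Rightarrow> 'a) \<Rightarrow> bool" where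
  "dual_pre_Poisson s circ br \<longleftrightarrow>
     vector_space s \<and> bilinear_map s s s circ \<and> bilinear_map s s s br \<and>
     (\<forall>x y z.
        circ x (circ y z) = circ (circ x y) z \<and>
        circ (circ x y) z = circ (circ y x) z \<and>
        br x (br y z) = br (br x y) z + br y (br x z) \<and>
        br x (circ y z) = circ (br x y) z + circ y (br x z) \<and>
        br (circ x y) z = circ x (br y z) + circ y (br x z) \<and>
        circ (br x y) z = - circ (br y x) z)"

text \<open>(T, tens) is a tensor product of the vector spaces (A, sA) and (B, sB):
tens is bilinear, the pure tensors span T, and every bilinear form on A \<times> B
factors through a linear functional on T (universal property; together with
spanning this determines T up to unique isomorphism as A \<otimes> B).\<close>

definition is_tensor_product ::
  "('k::field \<Rightarrow> 'a::ab_group_add \<Rightarrow> 'a) \<Rightarrow> ('k \<Rightarrow> 'b::ab_group_add \<Rightarrow> 'b) \<Rightarrow>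
   ('k \<Rightarrow> 't::ab_group_add \<Rightarrow> 't) \<Rightarrow> ('a \<Rightarrow> 'b \<Rightarrow> 't) \<Rightarrow> bool" where
  "is_tensor_product sA sB sT tens \<longleftrightarrow>
     vector_space sA \<and> vector_space sB \<and> vector_space sT \<and>
     bilinear_map sA sB sT tens \<and>
     module.span sT (range (case_prod tens)) = UNIV \<and>
     (\<forall>g. bilinear_map sA sB ((*) :: 'k \<Rightarrow> 'k \<Rightarrow> 'k) g \<longrightarrow>
        (\<exists>h. Vector_Spaces.linear sT ((*) :: 'k \<Rightarrow> 'k \<Rightarrow> 'k) h \<and> (\<forall>x y. h (tens x y) = g x y)))"

end

theory Submission
  imports Defs
begin

text \<open>All six defining identities are equalities between trilinear maps, so it suffices to
check them on pure tensors, which span A \<otimes> B. On pure tensors each identity expands into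
tensors of products in A and B; the identities of A and B, with \<open>\<circ>\<close> normalised by
associativity and left commutativity, make both sides agree. Characteristic 0 plays no role.\<close>

lemma bilinear_map_linear_left:
  "bilinear_map sA sB sC f \<Longrightarrow> Vector_Spaces.linear sA sC (\<lambda>x. f x y)"
  unfolding bilinear_map_def by blast

lemma bilinear_map_linear_right:
  "bilinear_map sA sB sC f \<Longrightarrow> Vector_Spaces.linear sB sC (f x)"
  unfolding bilinear_map_def by blast

lemma bilinear_map_swap:
  "bilinear_map sA sB sC f \<Longrightarrow> bilinear_map sB sA sC (\<lambda>y x. f x y)"
  unfolding bilinear_map_def by blast

lemma bilinear_map_add_left:
  "bilinear_map sA sB sC f \<Longrightarrow> f (x + x') y = f x y + f x' y"
  using module_hom.add[OF bilinear_map_linear_left[unfolded linear_iff_module_hom]] .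

lemma bilinear_map_add_right:
  "bilinear_map sA sB sC f \<Longrightarrow> f x (y + y') = f x y + f x y'"
  using module_hom.add[OF bilinear_map_linear_right[unfolded linear_iff_module_hom]] .

lemma bilinear_map_diff_left:
  "bilinear_map sA sB sC f \<Longrightarrow> f (x - x') y = f x y - f x' y"
  using module_hom.diff[OF bilinear_map_linear_left[unfolded linear_iff_module_hom]] .

lemma bilinear_map_diff_right:
  "bilinear_map sA sB sC f \<Longrightarrow> f x (y - y') = f x y - f x y'"
  using module_hom.diff[OF bilinear_map_linear_right[unfolded linear_iff_module_hom]] .

lemma bilinear_map_minus_left:
  "bilinear_map sA sB sC f \<Longrightarrow> f (- x) y = - f x y"
  using module_hom.neg[OF bilinear_map_linear_left[unfolded linear_iff_module_hom]] .

lemma bilinear_map_minus_right: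
  "bilinear_map sA sB sC f \<Longrightarrow> f x (- y) = - f x y"
  using module_hom.neg[OF bilinear_map_linear_right[unfolded linear_iff_module_hom]] .

definition trilinear_map ::
  "('k::field \<Rightarrow> 'a::ab_group_add \<Rightarrow> 'a) \<Rightarrow> ('k \<Rightarrow> 'b::ab_group_add \<Rightarrow> 'b) \<Rightarrow>
   ('a \<Rightarrow> 'a \<Rightarrow> 'a \<Rightarrow> 'b) \<Rightarrow> bool" where
  "trilinear_map s s' f \<longleftrightarrow>
     (\<forall>y z. Vector_Spaces.linear s s' (\<lambda>x. f x y z)) \<and>
     (\<forall>x z. Vector_Spaces.linear s s' (\<lambda>y. f x y z)) \<and>
     (\<forall>x y. Vector_Spaces.linear s s' (\<lambda>z. f x y z))"

lemma trilinear_map_compose_left: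
  assumes "bilinear_map s s s g" and "bilinear_map s s s' f"
  shows "trilinear_map s s' (\<lambda>x y z. f (g x y) z)"
  using Vector_Spaces.linear_compose[OF bilinear_map_linear_left[OF assms(1)]
      bilinear_map_linear_left[OF assms(2)]]
    Vector_Spaces.linear_compose[OF bilinear_map_linear_right[OF assms(1)]
      bilinear_map_linear_left[OF assms(2)]]
    bilinear_map_linear_right[OF assms(2)]
  by (simp add: trilinear_map_def comp_def)

lemma trilinear_map_compose_right:
  assumes "bilinear_map s s s g" and "bilinear_map s s s' f"
  shows "trilinear_map s s' (\<lambda>x y z. f x (g y z))"
  using bilinear_map_linear_left[OF assms(2)]
    Vector_Spaces.linear_compose[OF bilinear_map_linear_left[OF assms(1)]
      bilinear_map_linear_right[OF assms(2)]]
    Vector_Spaces.linear_compose[OF bilinear_map_linear_right[OF assms(1)]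
      bilinear_map_linear_right[OF assms(2)]]
  by (simp add: trilinear_map_def comp_def)

lemma trilinear_map_swap:
  "trilinear_map s s' f \<Longrightarrow> trilinear_map s s' (\<lambda>x y z. f y x z)"
  unfolding trilinear_map_def by blast

lemma linear_imp_vector_space_pair:
  "Vector_Spaces.linear s1 s2 f \<Longrightarrow> vector_space_pair s1 s2"
  unfolding Vector_Spaces.linear_iff vector_space_pair_def by blast

lemma trilinear_map_add:
  assumes "trilinear_map s s' f" and "trilinear_map s s' g"
  shows "trilinear_map s s' (\<lambda>x y z. f x y z + g x y z)"
proof -
  have linear_add: "Vector_Spaces.linear s s' (\<lambda>v. p v + q v)"
    if "Vector_Spaces.linear s s' p" "Vector_Spaces.linear s s' q" for p q
    using vector_space_pair.linear_compose_add[OF linear_imp_vector_space_pair[OF that(1)] that] .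
  show ?thesis
    using assms unfolding trilinear_map_def by (simp add: linear_add)
qed

lemma trilinear_map_minus:
  assumes "trilinear_map s s' f"
  shows "trilinear_map s s' (\<lambda>x y z. - f x y z)"
proof -
  have linear_minus: "Vector_Spaces.linear s s' (\<lambda>v. - p v)" if "Vector_Spaces.linear s s' p" for p
    using vector_space_pair.linear_compose_neg[OF linear_imp_vector_space_pair[OF that] that] .
  show ?thesis
    using assms unfolding trilinear_map_def by (simp add: linear_minus)
qed

lemma trilinear_map_eq_on_span:
  assumes f: "trilinear_map s s' f" and g: "trilinear_map s s' g"
    and span: "module.span s P = UNIV"
    and eq: "\<And>x y z. x \<in> P \<Longrightarrow> y \<in> P \<Longrightarrow> z \<in> P \<Longrightarrow> f x y z = g x y z"
  shows "f = g"
proof -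
  from f interpret vector_space_pair s s'
    unfolding trilinear_map_def by (blast intro: linear_imp_vector_space_pair)
  have in_span: "v \<in> module.span s P" for v
    using span by simp
  have eq_if_xy_in_P: "f x y z = g x y z" if "x \<in> P" "y \<in> P" for x y z
    using f g eq that
    by (intro linear_eq_on[of "f x y" "g x y" z P, OF _ _ in_span])
      (simp_all add: trilinear_map_def)
  have eq_if_x_in_P: "f x y z = g x y z" if "x \<in> P" for x y z
    using f g eq_if_xy_in_P that
    by (intro linear_eq_on[of "\<lambda>y. f x y z" "\<lambda>y. g x y z" y P, OF _ _ in_span])
      (simp_all add: trilinear_map_def)
  have "f x y z = g x y z" for x y z
    using f g eq_if_x_in_P
    by (intro linear_eq_on[of "\<lambda>x. f x y z" "\<lambda>x. g x y z" x P, OF _ _ in_span])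
      (simp_all add: trilinear_map_def)
  then show ?thesis by blast
qed

definition dual_pre_Poisson_identities ::
  "('a \<Rightarrow> 'a \<Rightarrow> 'a::ab_group_add) \<Rightarrow> ('a \<Rightarrow> 'a \<Rightarrow> 'a) \<Rightarrow> 'a \<Rightarrow> 'a \<Rightarrow> 'a \<Rightarrow> bool" where
  "dual_pre_Poisson_identities circ br x y z \<longleftrightarrow>
     circ x (circ y z) = circ (circ x y) z \<and>
     circ (circ x y) z = circ (circ y x) z \<and>
     br x (br y z) = br (br x y) z + br y (br x z) \<and>
     br x (circ y z) = circ (br x y) z + circ y (br x z) \<and>
     br (circ x y) z = circ x (br y z) + circ y (br x z) \<and>
     circ (br x y) z = - circ (br y x) z"

lemma dual_pre_Poisson_iff:
  "dual_pre_Poisson s circ br \<longleftrightarrow>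
     vector_space s \<and> bilinear_map s s s circ \<and> bilinear_map s s s br \<and>
     (\<forall>x y z. dual_pre_Poisson_identities circ br x y z)"
  unfolding dual_pre_Poisson_def dual_pre_Poisson_identities_def ..

lemma dual_pre_Poisson_if_identities_on_span:
  assumes vs: "vector_space s"
    and circ: "bilinear_map s s s circ" and br: "bilinear_map s s s br"
    and span: "module.span s P = UNIV"
    and on_span: "\<And>x y z. x \<in> P \<Longrightarrow> y \<in> P \<Longrightarrow> z \<in> P \<Longrightarrow>
      dual_pre_Poisson_identities circ br x y z"
  shows "dual_pre_Poisson s circ br"
proof -
  note eq = trilinear_map_eq_on_span[OF _ _ span]
  note identities_on_P = on_span[unfolded dual_pre_Poisson_identities_def]
  note left = trilinear_map_compose_left and right = trilinear_map_compose_right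
    and swap = trilinear_map_swap and flip = bilinear_map_swap
  have "(\<lambda>x y z. circ x (circ y z)) = (\<lambda>x y z. circ (circ x y) z)"
    by (rule eq[OF right[OF circ circ] left[OF circ circ]]) (use identities_on_P in blast)
  moreover have "(\<lambda>x y z. circ (circ x y) z) = (\<lambda>x y z. circ (circ y x) z)"
    by (rule eq[OF left[OF circ circ] left[OF flip[OF circ] circ]]) (use identities_on_P in blast)
  moreover have "(\<lambda>x y z. br x (br y z)) = (\<lambda>x y z. br (br x y) z + br y (br x z))"
    by (rule eq[OF right[OF br br] trilinear_map_add[OF left[OF br br] swap[OF right[OF br br]]]])
      (use identities_on_P in blast)
  moreover have "(\<lambda>x y z. br x (circ y z)) = (\<lambda>x y z. circ (br x y) z + circ y (br x z))"
    by (rule eq[OF right[OF circ br]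
          trilinear_map_add[OF left[OF br circ] swap[OF right[OF br circ]]]])
      (use identities_on_P in blast)
  moreover have "(\<lambda>x y z. br (circ x y) z) = (\<lambda>x y z. circ x (br y z) + circ y (br x z))"
    by (rule eq[OF left[OF circ br]
          trilinear_map_add[OF right[OF br circ] swap[OF right[OF br circ]]]])
      (use identities_on_P in blast)
  moreover have "(\<lambda>x y z. circ (br x y) z) = (\<lambda>x y z. - circ (br y x) z)"
    by (rule eq[OF left[OF br circ] trilinear_map_minus[OF left[OF flip[OF br] circ]]])
      (use identities_on_P in blast)
  ultimately have "\<forall>x y z. dual_pre_Poisson_identities circ br x y z"
    unfolding dual_pre_Poisson_identities_def fun_eq_iff by blast
  then show ?thesis
    using vs circ br by (simp add: dual_pre_Poisson_iff)
qed

lemma dual_pre_Poisson_circ_left_commute: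
  assumes "dual_pre_Poisson s circ br"
  shows "circ x (circ y z) = circ y (circ x z)"
proof -
  have assoc: "circ x (circ y z) = circ (circ x y) z"
    and perm: "circ (circ x y) z = circ (circ y x) z" for x y z
    using assms unfolding dual_pre_Poisson_def by blast+
  show ?thesis
    by (simp only: assoc perm[of x y])
qed

lemma tensor_dual_pre_Poisson_identities:
  assumes A: "dual_pre_Poisson sA cA bA" and B: "dual_pre_Poisson sB cB bB"
    and tens: "bilinear_map sA sB sT tens"
    and cT: "bilinear_map sT sT sT cT" and bT: "bilinear_map sT sT sT bT"
    and cT_tens: "\<And>x y a b. cT (tens x a) (tens y b) = tens (cA x y) (cB a b)"
    and bT_tens: "\<And>x y a b.
      bT (tens x a) (tens y b) = tens (bA x y) (cB a b) + tens (cA x y) (bB a b)"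
  shows "dual_pre_Poisson_identities cT bT (tens u a) (tens v b) (tens w c)"
proof -
  have A_circ: "cA (cA x y) z = cA x (cA y z)" "cA x (cA y z) = cA y (cA x z)"
    and A_br_circ: "bA x (cA y z) = cA (bA x y) z + cA y (bA x z)"
      "bA (cA x y) z = cA x (bA y z) + cA y (bA x z)" for x y z
    using A dual_pre_Poisson_circ_left_commute[OF A] unfolding dual_pre_Poisson_def by metis+
  have B_circ: "cB (cB x y) z = cB x (cB y z)" "cB x (cB y z) = cB y (cB x z)"
    and B_br_circ: "bB x (cB y z) = cB (bB x y) z + cB y (bB x z)"
      "bB (cB x y) z = cB x (bB y z) + cB y (bB x z)" for x y z
    using B dual_pre_Poisson_circ_left_commute[OF B] unfolding dual_pre_Poisson_def by metis+
  \<comment> \<open>Only these instances occur; as general rewrite rules Leibniz and skew symmetry loop.\<close>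
  have leibniz: "bA u (bA v w) = bA (bA u v) w + bA v (bA u w)"
      "bB a (bB b c) = bB (bB a b) c + bB b (bB a c)"
    and skew: "cA (bA v u) w = - cA (bA u v) w" "cB (bB b a) c = - cB (bB a b) c"
    using A B unfolding dual_pre_Poisson_def by blast+
  note expand = cT_tens bT_tens
    bilinear_map_add_left[OF cT] bilinear_map_add_right[OF cT]
    bilinear_map_add_left[OF bT] bilinear_map_add_right[OF bT]
    bilinear_map_add_left[OF tens] bilinear_map_add_right[OF tens]
    bilinear_map_minus_left[OF tens] bilinear_map_minus_right[OF tens]
    bilinear_map_diff_left[OF tens] bilinear_map_diff_right[OF tens]
  show ?thesis
    unfolding dual_pre_Poisson_identities_def
    by (simp add: expand A_circ B_circ A_br_circ B_br_circ leibniz skew algebra_simps)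
qed

theorem proposition2p5:
  fixes sA :: "'k::field_char_0 \<Rightarrow> 'a::ab_group_add \<Rightarrow> 'a"
    and sB :: "'k \<Rightarrow> 'b::ab_group_add \<Rightarrow> 'b"
    and sT :: "'k \<Rightarrow> 't::ab_group_add \<Rightarrow> 't"
    and cA bA :: "'a \<Rightarrow> 'a \<Rightarrow> 'a"
    and cB bB :: "'b \<Rightarrow> 'b \<Rightarrow> 'b"
    and tens :: "'a \<Rightarrow> 'b \<Rightarrow> 't"
    and cT bT :: "'t \<Rightarrow> 't \<Rightarrow> 't"
  assumes A: "dual_pre_Poisson sA cA bA"
    and B: "dual_pre_Poisson sB cB bB"
    and T: "is_tensor_product sA sB sT tens"
    and cT_bil: "bilinear_map sT sT sT cT"
    and bT_bil: "bilinear_map sT sT sT bT"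
    and cT_def: "\<And>x y a b. cT (tens x a) (tens y b) = tens (cA x y) (cB a b)"
    and bT_def: "\<And>x y a b. bT (tens x a) (tens y b) = tens (bA x y) (cB a b) + tens (cA x y) (bB a b)"
  shows "dual_pre_Poisson sT cT bT"
proof -
  have tens: "bilinear_map sA sB sT tens" and vsT: "vector_space sT"
    and span: "module.span sT (range (case_prod tens)) = UNIV"
    using T unfolding is_tensor_product_def by blast+
  show ?thesis
  proof (rule dual_pre_Poisson_if_identities_on_span[OF vsT cT_bil bT_bil span])
    fix x y z
    assume "x \<in> range (case_prod tens)" "y \<in> range (case_prod tens)" "z \<in> range (case_prod tens)"
    then obtain u a v b w c where "x = tens u a" "y = tens v b" "z = tens w c"
      by auto
    then show "dual_pre_Poisson_identities cT bT x y z"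
      using tensor_dual_pre_Poisson_identities[OF A B tens cT_bil bT_bil cT_def bT_def] by simp
  qed
qed

end
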